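(* Let $\mathbb{K}$ be a field, let $P_1, P_2 \in \mathbb{K}[X]$ be irreducible, let $n > 1$, and let $f : \mathbb{K}[X]/(P_1) \to \mathbb{K}[X]/(P_2)$ be a ring isomorphism stabilizing $\mathbb{K}$. Then the ring homomorphism $f_{X,n} : \mathbb{K}[X]/(P_1^n) \to \mathbb{K}[X]/(P_2^n)$ is an isomorphism (stabilizing $\mathbb{K}$) if and only if $Q_f' \neq 0$.
   Context: A ring homomorphism $f : A \to B$ between $\mathbb{K}$-algebras stabilizes $\mathbb{K}$ if there is a field automorphism $\sigma_f$ of $\mathbb{K}$ with $f(a) = \sigma_f(a)$ for all $a \in \mathbb{K}$. For a field automorphism $\sigma$ of $\mathbb{K}$, $\sigma^X$ is the ring automorphism of $\mathbb{K}[X]$ applying $\sigma$ to coefficients; $A\circ Q$ denotes $A(Q(X))$; $'$ denotes the formal derivative. For a ring isomorphism $f : \mathbb{K}[X]/(P_1) \to \mathbb{K}[X]/(P_2)$ stabilizing $\mathbb{K}$: $Q_f$ is the unique polynomial of degree $< \deg P_2$ such that $f$ sends the class of $X$ to the class of $Q_f$, and $f_{X,n} : \mathbb{K}[X]/(P_1^n) \to \mathbb{K}[X]/(P_2^n)$ is the well-defined ring homomorphism sending the class of $P$ to the class of $\sigma_f^X(P)\circ Q_f$. *)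

theory Defs
  imports "HOL-Computational_Algebra.Polynomial_Factorial"
begin

text \<open>The quotient ring K[X]/(P) is modelled by the set of canonical representatives
  p mod P. A map f on polynomials represents a map of quotient rings when it only depends
  on the class (f p = f (p mod P1)) and takes canonical representatives as values.\<close>

definition qcarrier :: "'a::field poly \<Rightarrow> 'a poly set" where
  "qcarrier P = range (\<lambda>p. p mod P)"

definition qring_hom :: "'a::field poly \<Rightarrow> 'a poly \<Rightarrow> ('a poly \<Rightarrow> 'a poly) \<Rightarrow> bool" where
  "qring_hom P1 P2 f \<longleftrightarrow>
     (\<forall>p. f p = f (p mod P1)) \<and> (\<forall>p. f p mod P2 = f p) \<and>
     f 1 = 1 mod P2 \<and>
     (\<forall>p q. f (p + q) = f p + f q) \<and>
     (\<forall>p q. f (p * q) = (f p * f q) mod P2)"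

definition qring_iso :: "'a::field poly \<Rightarrow> 'a poly \<Rightarrow> ('a poly \<Rightarrow> 'a poly) \<Rightarrow> bool" where
  "qring_iso P1 P2 f \<longleftrightarrow> qring_hom P1 P2 f \<and> bij_betw f (qcarrier P1) (qcarrier P2)"

definition field_aut :: "('a::field \<Rightarrow> 'a) \<Rightarrow> bool" where
  "field_aut \<sigma> \<longleftrightarrow> bij \<sigma> \<and> \<sigma> 1 = 1 \<and> (\<forall>a b. \<sigma> (a + b) = \<sigma> a + \<sigma> b) \<and>
     (\<forall>a b. \<sigma> (a * b) = \<sigma> a * \<sigma> b)"

definition stabilizes_K :: "'a::field poly \<Rightarrow> ('a poly \<Rightarrow> 'a poly) \<Rightarrow> bool" where
  "stabilizes_K P2 f \<longleftrightarrow> (\<exists>\<sigma>. field_aut \<sigma> \<and> (\<forall>a. f [:a:] = [:\<sigma> a:] mod P2))"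

definition sigma_f :: "'a::field poly \<Rightarrow> ('a poly \<Rightarrow> 'a poly) \<Rightarrow> 'a \<Rightarrow> 'a" where
  "sigma_f P2 f = (THE \<sigma>. field_aut \<sigma> \<and> (\<forall>a. f [:a:] = [:\<sigma> a:] mod P2))"

definition Q_f :: "'a::field poly \<Rightarrow> ('a poly \<Rightarrow> 'a poly) \<Rightarrow> 'a poly" where
  "Q_f P2 f = (THE Q. (Q = 0 \<or> degree Q < degree P2) \<and> f [:0, 1:] mod P2 = Q mod P2)"

definition f_Xn :: "'a::field poly \<Rightarrow> 'a poly \<Rightarrow> ('a poly \<Rightarrow> 'a poly) \<Rightarrow> nat \<Rightarrow> 'a poly \<Rightarrow> 'a poly" where
  "f_Xn P1 P2 f n p =
     pcompose (map_poly (sigma_f P2 f) (p mod P1 ^ n)) (Q_f P2 f) mod P2 ^ n"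

end

theory Submission
  imports Defs
begin

(*
  Put phi p = sigma^X(p) o Q_f.  This is a ring endomorphism of K[X] mapping (P1) into (P2), and f
  and f_{X,n} are the maps it induces modulo P1, P2 and modulo P1^n, P2^n.  As (phi w)' = phi(w') Q_f',
  if Q_f' = 0 then X is not congruent to any phi w modulo P2^2, so f_{X,n} is not surjective.
  If Q_f' is nonzero it is prime to P2, because deg Q_f < deg P2.  Then P2 divides phi P1 exactly
  once: otherwise P1 divides P1', so d/dX preserves (P1), and pulling X and P2 back along f forces
  P2 | P2', which contradicts the Taylor expansion of P2 around a preimage of X.  Writing
  phi P1 = P2 T with T prime to P2, injectivity and surjectivity modulo P2^n follow by induction
  on n, as in Hensel's lemma.
*)

lemma field_aut_0: "field_aut \<sigma> \<Longrightarrow> \<sigma> 0 = 0"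
  unfolding field_aut_def by (metis add_cancel_right_right add_0)

lemma field_aut_1: "field_aut \<sigma> \<Longrightarrow> \<sigma> 1 = 1"
  unfolding field_aut_def by blast

lemma field_aut_add: "field_aut \<sigma> \<Longrightarrow> \<sigma> (a + b) = \<sigma> a + \<sigma> b"
  unfolding field_aut_def by blast

lemma field_aut_mult: "field_aut \<sigma> \<Longrightarrow> \<sigma> (a * b) = \<sigma> a * \<sigma> b"
  unfolding field_aut_def by blast

lemma field_aut_diff: "field_aut \<sigma> \<Longrightarrow> \<sigma> (a - b) = \<sigma> a - \<sigma> b"
  by (metis field_aut_add diff_add_cancel eq_diff_eq)

lemma field_aut_of_nat: "field_aut \<sigma> \<Longrightarrow> \<sigma> (of_nat n) = of_nat n"
  by (induction n) (simp_all add: field_aut_0 field_aut_add field_aut_1)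

lemma field_aut_inv:
  assumes "field_aut \<sigma>"
  shows "field_aut (inv \<sigma>)"
proof -
  have bij: "bij \<sigma>" using assms by (simp add: field_aut_def)
  have inv_eq: "inv \<sigma> y = x" if "\<sigma> x = y" for x y
    using bij that by (metis bij_is_inj inv_f_f)
  have "\<sigma> (inv \<sigma> a) = a" for a
    using bij by (simp add: bij_is_surj surj_f_inv_f)
  then show ?thesis
    using bij assms unfolding field_aut_def
    by (auto intro!: inv_eq bij_imp_bij_inv simp: field_aut_add field_aut_mult)
qed

lemma map_poly_field_aut_add:
  "field_aut \<sigma> \<Longrightarrow> map_poly \<sigma> (p + q) = map_poly \<sigma> p + map_poly \<sigma> q"
  by (intro poly_eqI) (simp add: coeff_map_poly field_aut_0 field_aut_add)

lemma map_poly_field_aut_diff: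
  "field_aut \<sigma> \<Longrightarrow> map_poly \<sigma> (p - q) = map_poly \<sigma> p - map_poly \<sigma> q"
  by (intro poly_eqI) (simp add: coeff_map_poly field_aut_0 field_aut_diff)

lemma map_poly_field_aut_const: "field_aut \<sigma> \<Longrightarrow> map_poly \<sigma> [:a:] = [:\<sigma> a:]"
  by (simp add: map_poly_pCons field_aut_0)

lemma map_poly_field_aut_mult:
  "field_aut \<sigma> \<Longrightarrow> map_poly \<sigma> (p * q) = map_poly \<sigma> p * map_poly \<sigma> q"
  by (induction p)
    (simp_all add: mult_pCons_left map_poly_field_aut_add map_poly_smult map_poly_pCons
      field_aut_0 field_aut_mult)

lemma map_poly_field_aut_pcompose:
  "field_aut \<sigma> \<Longrightarrow> map_poly \<sigma> (pcompose p q) = pcompose (map_poly \<sigma> p) (map_poly \<sigma> q)"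
  by (induction p)
    (simp_all add: pcompose_pCons map_poly_field_aut_add map_poly_field_aut_mult
      map_poly_pCons field_aut_0 map_poly_field_aut_const)

lemma map_poly_field_aut_pderiv:
  "field_aut \<sigma> \<Longrightarrow> map_poly \<sigma> (pderiv p) = pderiv (map_poly \<sigma> p)"
  by (intro poly_eqI)
    (simp add: coeff_map_poly coeff_pderiv field_aut_0 field_aut_mult
      field_aut_of_nat[where n = "Suc _", simplified])

definition twist :: "('a::field \<Rightarrow> 'a) \<Rightarrow> 'a poly \<Rightarrow> 'a poly \<Rightarrow> 'a poly" where
  "twist \<sigma> Q p = pcompose (map_poly \<sigma> p) Q"

lemma twist_0 [simp]: "twist \<sigma> Q 0 = 0"
  by (simp add: twist_def)

lemma twist_add: "field_aut \<sigma> \<Longrightarrow> twist \<sigma> Q (p + q) = twist \<sigma> Q p + twist \<sigma> Q q"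
  by (simp add: twist_def map_poly_field_aut_add pcompose_add)

lemma twist_diff: "field_aut \<sigma> \<Longrightarrow> twist \<sigma> Q (p - q) = twist \<sigma> Q p - twist \<sigma> Q q"
  by (simp add: twist_def map_poly_field_aut_diff pcompose_diff)

lemma twist_mult: "field_aut \<sigma> \<Longrightarrow> twist \<sigma> Q (p * q) = twist \<sigma> Q p * twist \<sigma> Q q"
  by (simp add: twist_def map_poly_field_aut_mult pcompose_mult)

lemma twist_const: "field_aut \<sigma> \<Longrightarrow> twist \<sigma> Q [:a:] = [:\<sigma> a:]"
  by (simp add: twist_def map_poly_field_aut_const)

lemma twist_1: "field_aut \<sigma> \<Longrightarrow> twist \<sigma> Q 1 = 1"
  using twist_const[of \<sigma> Q 1] by (simp add: field_aut_1 one_pCons)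

lemma twist_power: "field_aut \<sigma> \<Longrightarrow> twist \<sigma> Q (p ^ k) = twist \<sigma> Q p ^ k"
  by (induction k) (simp_all add: twist_1 twist_mult)

lemma twist_X: "field_aut \<sigma> \<Longrightarrow> twist \<sigma> Q [:0, 1:] = Q"
  by (simp add: twist_def map_poly_pCons field_aut_0 field_aut_1 pcompose_pCons)

lemma twist_dvd_twist: "field_aut \<sigma> \<Longrightarrow> p dvd q \<Longrightarrow> twist \<sigma> Q p dvd twist \<sigma> Q q"
  by (auto elim!: dvdE simp: twist_mult)

lemma pderiv_twist:
  "field_aut \<sigma> \<Longrightarrow> pderiv (twist \<sigma> Q p) = twist \<sigma> Q (pderiv p) * pderiv Q"
  by (simp add: twist_def pderiv_pcompose map_poly_field_aut_pderiv)

lemma twist_twist_inv: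
  assumes "field_aut \<sigma>"
  shows "twist \<sigma> Q (twist (inv \<sigma>) h g) = pcompose g (twist \<sigma> Q h)"
proof -
  have "\<sigma> \<circ> inv \<sigma> = id"
    using assms surj_iff bij_is_surj unfolding field_aut_def by blast
  then have "map_poly \<sigma> (map_poly (inv \<sigma>) g) = g"
    using assms by (simp add: map_poly_map_poly field_aut_0 field_aut_inv)
  then show ?thesis
    using assms by (simp add: twist_def map_poly_field_aut_pcompose pcompose_assoc)
qed

lemma dvd_pcompose_diff:
  fixes a b p :: "'a::comm_ring_1 poly"
  shows "a - b dvd pcompose p a - pcompose p b"
proof (induction p)
  case (pCons c p)
  have "pcompose (pCons c p) a - pcompose (pCons c p) b
      = a * (pcompose p a - pcompose p b) + (a - b) * pcompose p b"
    by (simp add: pcompose_pCons algebra_simps)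
  then show ?case
    using pCons by simp
qed simp

lemma power2_dvd_taylor_remainder:
  fixes a e p :: "'a::idom poly"
  shows "e\<^sup>2 dvd pcompose p (a + e) - pcompose p a - pcompose (pderiv p) a * e"
proof (induction p)
  case (pCons c p)
  from pCons.IH obtain r
    where "pcompose p (a + e) - pcompose p a - pcompose (pderiv p) a * e = e\<^sup>2 * r"
    by (rule dvdE)
  then have r: "pcompose p (a + e) = pcompose p a + pcompose (pderiv p) a * e + e\<^sup>2 * r"
    by (simp add: algebra_simps)
  have "pcompose (pCons c p) (a + e) - pcompose (pCons c p) a - pcompose (pderiv (pCons c p)) a * e
      = e\<^sup>2 * (pcompose (pderiv p) a + (a + e) * r)"
    by (simp add: r pcompose_pCons pderiv_pCons pcompose_add power2_eq_square algebra_simps)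
  then show ?case
    by simp
qed simp

lemma power2_dvd_imp_dvd_pderiv:
  fixes p q :: "'a::idom poly"
  shows "p\<^sup>2 dvd q \<Longrightarrow> p dvd pderiv q"
  by (auto elim!: dvdE simp: pderiv_mult power2_eq_square)

lemma dvd_pderiv_if_dvd_pderiv_self:
  fixes p q :: "'a::idom poly"
  shows "p dvd pderiv p \<Longrightarrow> p dvd q \<Longrightarrow> p dvd pderiv q"
  by (auto elim!: dvdE simp: pderiv_mult)

lemma degree_pderiv_le: "degree (pderiv p) \<le> degree p - 1"
  by (rule degree_le) (auto simp: coeff_pderiv coeff_eq_0)

lemma dvd_pderiv_iff_pderiv_eq_0:
  fixes p q :: "'a::field poly"
  assumes "q mod p = q"
  shows "p dvd pderiv q \<longleftrightarrow> pderiv q = 0"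
proof
  assume dvd: "p dvd pderiv q"
  show "pderiv q = 0"
  proof (rule ccontr)
    assume nz: "pderiv q \<noteq> 0"
    then have "p \<noteq> 0" "q \<noteq> 0"
      using dvd by auto
    then have "degree q < degree p"
      using assms degree_mod_less'[of p q] by simp
    moreover have "degree p \<le> degree (pderiv q)"
      using dvd nz by (rule dvd_imp_degree_le)
    ultimately show False
      using degree_pderiv_le[of q] by linarith
  qed
qed simp

lemma degree_pos_if_irreducible: "irreducible (p :: 'a::field poly) \<Longrightarrow> degree p > 0"
  by (metis gr0I irreducible_not_unit is_unit_iff_degree not_irreducible_zero)

lemma ex_lincomb_common_divisor:
  fixes a b :: "'a::field poly"
  shows "\<exists>u v. u * a + v * b dvd a \<and> u * a + v * b dvd b"
proof (induction b arbitrary: a rule: measure_induct_rule[where f = "\<lambda>b. if b = 0 then 0 else Suc (degree b)"])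
  case (less b)
  show ?case
  proof (cases "b = 0")
    case True
    then show ?thesis
      by (intro exI[of _ 1] exI[of _ 0]) simp
  next
    case False
    then have "(if a mod b = 0 then 0 else Suc (degree (a mod b))) < Suc (degree b)"
      using degree_mod_less'[of b a] by auto
    then obtain u v where uv: "u * b + v * (a mod b) dvd b" "u * b + v * (a mod b) dvd a mod b"
      using less[of "a mod b" b] False by auto
    from uv have "u * b + v * (a mod b) dvd a div b * b + a mod b"
      by (blast intro: dvd_add dvd_mult)
    then have "u * b + v * (a mod b) dvd a"
      by simp
    moreover have "u * b + v * (a mod b) = v * a + (u - v * (a div b)) * b"
      by (simp add: minus_div_mult_eq_mod[symmetric] algebra_simps)
    ultimately show ?thesis
      using uv(1) by (intro exI[of _ v] exI[of _ "u - v * (a div b)"]) simp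
  qed
qed

lemma ex_inverse_mod_irreducible:
  fixes p a :: "'a::field poly"
  assumes "irreducible p" and "\<not> p dvd a"
  shows "\<exists>u. p dvd u * a - 1"
proof -
  obtain u v where d: "u * a + v * p dvd a" "u * a + v * p dvd p"
    using ex_lincomb_common_divisor by blast
  then have "\<not> p dvd u * a + v * p"
    using assms(2) dvd_trans by blast
  then have "is_unit (u * a + v * p)"
    using irreducibleD'[OF assms(1) d(2)] by blast
  then obtain k where "1 = (u * a + v * p) * k"
    by (rule dvdE)
  then have "k * u * a - 1 = - (k * v) * p"
    by (simp add: algebra_simps)
  then show ?thesis
    by (intro exI[of _ "k * u"]) simp
qed

lemma qcarrier_iff: "p \<in> qcarrier N \<longleftrightarrow> p mod N = p"
proof
  assume "p mod N = p"
  then show "p \<in> qcarrier N"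
    using rangeI[of "\<lambda>p. p mod N" p] by (simp add: qcarrier_def)
qed (auto simp: qcarrier_def)

definition twist_mod :: "('a::field \<Rightarrow> 'a) \<Rightarrow> 'a poly \<Rightarrow> 'a poly \<Rightarrow> 'a poly \<Rightarrow> 'a poly \<Rightarrow> 'a poly"
  where "twist_mod \<sigma> Q N M p = twist \<sigma> Q (p mod N) mod M"

lemma twist_mod_mod [simp]: "twist_mod \<sigma> Q N M (p mod N) = twist_mod \<sigma> Q N M p"
  by (simp add: twist_mod_def)

lemma twist_mod_eq:
  assumes "field_aut \<sigma>" and "M dvd twist \<sigma> Q N"
  shows "twist_mod \<sigma> Q N M p = twist \<sigma> Q p mod M"
proof -
  have "N dvd p mod N - p"
    by (simp add: mod_eq_dvd_iff[symmetric])
  then have "M dvd twist \<sigma> Q (p mod N) - twist \<sigma> Q p"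
    using assms by (metis dvd_trans twist_diff twist_dvd_twist)
  then show ?thesis
    by (simp add: twist_mod_def mod_eq_dvd_iff)
qed

lemma qring_hom_twist_mod:
  assumes \<sigma>: "field_aut \<sigma>" and "M dvd twist \<sigma> Q N"
  shows "qring_hom N M (twist_mod \<sigma> Q N M)"
  unfolding qring_hom_def
proof (intro conjI allI)
  note eq = twist_mod_eq[OF assms]
  fix p q
  show "twist_mod \<sigma> Q N M p = twist_mod \<sigma> Q N M (p mod N)"
    "twist_mod \<sigma> Q N M p mod M = twist_mod \<sigma> Q N M p"
    by (simp_all add: twist_mod_def)
  show "twist_mod \<sigma> Q N M 1 = 1 mod M"
    by (simp add: eq twist_1 \<sigma>)
  show "twist_mod \<sigma> Q N M (p + q) = twist_mod \<sigma> Q N M p + twist_mod \<sigma> Q N M q"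
    by (simp add: eq twist_add \<sigma> poly_mod_add_left)
  show "twist_mod \<sigma> Q N M (p * q) = twist_mod \<sigma> Q N M p * twist_mod \<sigma> Q N M q mod M"
    by (simp add: eq twist_mult \<sigma> mod_mult_eq)
qed

lemma stabilizes_K_twist_mod:
  assumes "field_aut \<sigma>" and "degree N > 0"
  shows "stabilizes_K M (twist_mod \<sigma> Q N M)"
  unfolding stabilizes_K_def twist_mod_def
  using assms by (intro exI[of _ \<sigma>]) (simp add: mod_poly_less twist_const)

lemma inj_on_twist_mod_iff:
  assumes "field_aut \<sigma>" and "M dvd twist \<sigma> Q N"
  shows "inj_on (twist_mod \<sigma> Q N M) (qcarrier N) \<longleftrightarrow> (\<forall>w. M dvd twist \<sigma> Q w \<longrightarrow> N dvd w)"
proof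
  note eq = twist_mod_eq[OF assms]
  assume inj: "inj_on (twist_mod \<sigma> Q N M) (qcarrier N)"
  show "\<forall>w. M dvd twist \<sigma> Q w \<longrightarrow> N dvd w"
  proof (intro allI impI)
    fix w
    assume "M dvd twist \<sigma> Q w"
    then have "twist_mod \<sigma> Q N M (w mod N) = twist_mod \<sigma> Q N M 0"
      by (simp only: twist_mod_mod) (simp add: eq)
    then have "w mod N = 0"
      by (rule inj_onD[OF inj]) (simp_all add: qcarrier_iff)
    then show "N dvd w"
      by (simp add: mod_eq_0_iff_dvd)
  qed
next
  note eq = twist_mod_eq[OF assms]
  assume ker: "\<forall>w. M dvd twist \<sigma> Q w \<longrightarrow> N dvd w"
  show "inj_on (twist_mod \<sigma> Q N M) (qcarrier N)"
  proof (rule inj_onI)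
    fix x y
    assume "x \<in> qcarrier N" "y \<in> qcarrier N" and "twist_mod \<sigma> Q N M x = twist_mod \<sigma> Q N M y"
    then have "M dvd twist \<sigma> Q (x - y)"
      using assms(1) by (simp add: eq mod_eq_dvd_iff twist_diff)
    then have "x mod N = y mod N"
      using ker by (simp add: mod_eq_dvd_iff)
    then show "x = y"
      using \<open>x \<in> qcarrier N\<close> \<open>y \<in> qcarrier N\<close> by (simp add: qcarrier_iff)
  qed
qed

lemma twist_mod_image_eq_iff:
  assumes "field_aut \<sigma>" and "M dvd twist \<sigma> Q N"
  shows "twist_mod \<sigma> Q N M ` qcarrier N = qcarrier M \<longleftrightarrow> (\<forall>y. \<exists>w. M dvd twist \<sigma> Q w - y)"
proof
  note eq = twist_mod_eq[OF assms]
  assume img: "twist_mod \<sigma> Q N M ` qcarrier N = qcarrier M"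
  show "\<forall>y. \<exists>w. M dvd twist \<sigma> Q w - y"
  proof
    fix y
    have "y mod M \<in> twist_mod \<sigma> Q N M ` qcarrier N"
      using img by (simp add: qcarrier_iff)
    then show "\<exists>w. M dvd twist \<sigma> Q w - y"
      by (auto simp: eq mod_eq_dvd_iff dvd_diff_commute[of M y])
  qed
next
  note eq = twist_mod_eq[OF assms]
  assume surj: "\<forall>y. \<exists>w. M dvd twist \<sigma> Q w - y"
  show "twist_mod \<sigma> Q N M ` qcarrier N = qcarrier M"
  proof (intro subset_antisym subsetI)
    fix y
    assume "y \<in> twist_mod \<sigma> Q N M ` qcarrier N"
    then show "y \<in> qcarrier M"
      by (auto simp: qcarrier_iff twist_mod_def)
  next
    fix y
    assume "y \<in> qcarrier M"
    moreover obtain w where "M dvd twist \<sigma> Q w - y"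
      using surj by blast
    ultimately have "twist_mod \<sigma> Q N M (w mod N) = y"
      by (simp only: twist_mod_mod) (simp add: eq qcarrier_iff mod_eq_dvd_iff[symmetric])
    moreover have "w mod N \<in> qcarrier N"
      by (simp add: qcarrier_iff)
    ultimately show "y \<in> twist_mod \<sigma> Q N M ` qcarrier N"
      by (metis imageI)
  qed
qed

lemma qring_iso_twist_mod_iff:
  assumes "field_aut \<sigma>" and "M dvd twist \<sigma> Q N"
  shows "qring_iso N M (twist_mod \<sigma> Q N M) \<longleftrightarrow>
    (\<forall>w. M dvd twist \<sigma> Q w \<longrightarrow> N dvd w) \<and> (\<forall>y. \<exists>w. M dvd twist \<sigma> Q w - y)"
  using qring_hom_twist_mod[OF assms] inj_on_twist_mod_iff[OF assms] twist_mod_image_eq_iff[OF assms]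
  by (simp add: qring_iso_def bij_betw_def)

lemma not_dvd_pderiv_if_power2_dvd_twist_minus_X:
  assumes \<sigma>: "field_aut \<sigma>" and sq: "p\<^sup>2 dvd twist \<sigma> Q w - [:0, 1:]" and "\<not> is_unit p"
  shows "\<not> p dvd pderiv Q"
proof
  assume Q': "p dvd pderiv Q"
  have "p dvd pderiv (twist \<sigma> Q w - [:0, 1:])"
    using sq by (rule power2_dvd_imp_dvd_pderiv)
  also have "pderiv (twist \<sigma> Q w - [:0, 1:]) = twist \<sigma> Q (pderiv w) * pderiv Q - 1"
    using \<sigma> by (simp add: pderiv_diff pderiv_twist pderiv_pCons one_pCons)
  finally have "p dvd twist \<sigma> Q (pderiv w) * pderiv Q - 1" .
  moreover have "p dvd twist \<sigma> Q (pderiv w) * pderiv Q"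
    using Q' by simp
  ultimately have "p dvd (twist \<sigma> Q (pderiv w) * pderiv Q - 1) - twist \<sigma> Q (pderiv w) * pderiv Q"
    by (rule dvd_diff)
  then have "p dvd 1"
    by simp
  then show False
    using assms(3) by simp
qed

lemma sigma_f_spec:
  assumes "degree P2 > 0" and "stabilizes_K P2 f"
  shows "field_aut (sigma_f P2 f) \<and> (\<forall>a. f [:a:] = [:sigma_f P2 f a:])"
proof -
  have const_mod: "[:c:] mod P2 = [:c:]" for c
    using assms(1) by (simp add: mod_poly_less)
  obtain \<tau> where \<tau>: "field_aut \<tau> \<and> (\<forall>a. f [:a:] = [:\<tau> a:] mod P2)"
    using assms(2) by (auto simp: stabilizes_K_def)
  have "sigma_f P2 f = \<tau>"
    unfolding sigma_f_def
  proof (rule the_equality)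
    show "\<tau>' = \<tau>" if "field_aut \<tau>' \<and> (\<forall>a. f [:a:] = [:\<tau>' a:] mod P2)" for \<tau>'
      using that \<tau> by (auto simp: const_mod fun_eq_iff)
  qed (rule \<tau>)
  then show ?thesis
    using \<tau> by (simp add: const_mod)
qed

lemma Q_f_eq:
  assumes "qring_hom P1 P2 f" and "P2 \<noteq> 0"
  shows "Q_f P2 f = f [:0, 1:]"
  unfolding Q_f_def
proof (rule the_equality)
  have red: "f [:0, 1:] mod P2 = f [:0, 1:]"
    using assms(1) by (simp add: qring_hom_def)
  then show "(f [:0, 1:] = 0 \<or> degree (f [:0, 1:]) < degree P2) \<and> f [:0, 1:] mod P2 = f [:0, 1:] mod P2"
    using degree_mod_less[OF assms(2), of "f [:0, 1:]"] by simp
  show "Q = f [:0, 1:]" if "(Q = 0 \<or> degree Q < degree P2) \<and> f [:0, 1:] mod P2 = Q mod P2" for Q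
    using that red by (auto simp: mod_poly_less)
qed

lemma qring_hom_eq_twist:
  assumes hom: "qring_hom P1 P2 f" and stab: "stabilizes_K P2 f" and deg: "degree P2 > 0"
  shows "f p = twist (sigma_f P2 f) (Q_f P2 f) p mod P2"
proof -
  define \<sigma> Q where "\<sigma> = sigma_f P2 f" and "Q = Q_f P2 f"
  have \<sigma>: "field_aut \<sigma>" and f_const: "\<And>a. f [:a:] = [:\<sigma> a:]"
    using sigma_f_spec[OF deg stab] by (simp_all add: \<sigma>_def)
  have "P2 \<noteq> 0"
    using deg by auto
  then have f_X: "f [:0, 1:] = Q"
    using Q_f_eq[OF hom] by (simp add: Q_def)
  have f_add: "\<And>p q. f (p + q) = f p + f q" and f_mult: "\<And>p q. f (p * q) = f p * f q mod P2"
    using hom by (simp_all add: qring_hom_def)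
  have "f p = twist \<sigma> Q p mod P2"
  proof (induction p)
    case 0
    have "f 0 + f 0 = f 0 + 0"
      using f_add[of 0 0] by simp
    then have "f 0 = 0"
      by (rule add_left_imp_eq)
    then show ?case
      by simp
  next
    case (pCons a p)
    have "f (pCons a p) = f [:a:] + f ([:0, 1:] * p)"
      using f_add[of "[:a:]" "[:0, 1:] * p"] by simp
    also have "\<dots> = [:\<sigma> a:] + Q * (twist \<sigma> Q p mod P2) mod P2"
      by (simp only: f_const f_mult f_X pCons.IH)
    also have "\<dots> = ([:\<sigma> a:] + Q * twist \<sigma> Q p) mod P2"
      using deg by (simp add: mod_mult_right_eq poly_mod_add_left mod_poly_less)
    also have "\<dots> = twist \<sigma> Q (pCons a p) mod P2"
      using \<sigma> by (simp add: twist_def map_poly_pCons field_aut_0 pcompose_pCons)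
    finally show ?case .
  qed
  then show ?thesis
    by (simp add: \<sigma>_def Q_def)
qed

locale twist_iso =
  fixes \<sigma> :: "'a::field \<Rightarrow> 'a" and Q P1 P2 :: "'a poly"
  assumes field_aut: "field_aut \<sigma>"
    and irreducible_P1: "irreducible P1" and irreducible_P2: "irreducible P2"
    and P2_dvd_twist_iff: "P2 dvd twist \<sigma> Q w \<longleftrightarrow> P1 dvd w"
    and twist_surj: "\<exists>w. P2 dvd twist \<sigma> Q w - y"
begin

lemma prime_elem_P1: "prime_elem P1"
  using irreducible_P1 by (rule field_poly_irreducible_imp_prime)

lemma prime_elem_P2: "prime_elem P2"
  using irreducible_P2 by (rule field_poly_irreducible_imp_prime)

lemma power_dvd_twist_if_power_dvd:
  assumes "P1 ^ m dvd w"
  shows "P2 ^ m dvd twist \<sigma> Q w"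
proof -
  have "P2 ^ m dvd twist \<sigma> Q (P1 ^ m)"
    using P2_dvd_twist_iff[of P1] by (simp add: twist_power field_aut dvd_power_same)
  also have "twist \<sigma> Q (P1 ^ m) dvd twist \<sigma> Q w"
    using field_aut assms by (rule twist_dvd_twist)
  finally show ?thesis .
qed

lemma dvd_twist_inv_iff:
  assumes h: "P2 dvd twist \<sigma> Q h - [:0, 1:]"
  shows "P1 dvd twist (inv \<sigma>) h g \<longleftrightarrow> P2 dvd g"
proof -
  have "P2 dvd twist \<sigma> Q (twist (inv \<sigma>) h g) - g"
    using dvd_trans[OF h dvd_pcompose_diff, of g] by (simp add: twist_twist_inv field_aut)
  then have "P2 dvd twist \<sigma> Q (twist (inv \<sigma>) h g) - g + g \<longleftrightarrow> P2 dvd g"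
    by (rule dvd_add_right_iff)
  then show ?thesis
    by (simp add: P2_dvd_twist_iff)
qed

lemma dvd_twist_inv_Q_minus_X:
  assumes h: "P2 dvd twist \<sigma> Q h - [:0, 1:]"
  shows "P1 dvd twist (inv \<sigma>) h Q - [:0, 1:]"
proof -
  have "twist \<sigma> Q (twist (inv \<sigma>) h Q - [:0, 1:]) = pcompose Q (twist \<sigma> Q h) - pcompose Q [:0, 1:]"
    using field_aut by (simp add: twist_diff twist_twist_inv twist_X)
  then have "P2 dvd twist \<sigma> Q (twist (inv \<sigma>) h Q - [:0, 1:])"
    using dvd_trans[OF h dvd_pcompose_diff] by simp
  then show ?thesis
    by (simp add: P2_dvd_twist_iff)
qed

lemma not_dvd_pderiv_P2:
  assumes sq: "P2\<^sup>2 dvd twist \<sigma> Q P1" and h: "P2 dvd twist \<sigma> Q h - [:0, 1:]"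
  shows "\<not> P2 dvd pderiv P2"
proof
  assume P2': "P2 dvd pderiv P2"
  define E where "E = twist \<sigma> Q h - [:0, 1:]"
  have "P1 dvd twist (inv \<sigma>) h P2"
    using dvd_twist_inv_iff[OF h] by simp
  then have "P2\<^sup>2 dvd twist \<sigma> Q (twist (inv \<sigma>) h P2)"
    using sq twist_dvd_twist[OF field_aut] dvd_trans by blast
  then have A: "P2\<^sup>2 dvd pcompose P2 ([:0, 1:] + E)"
    by (simp add: twist_twist_inv field_aut E_def)
  have "P2\<^sup>2 dvd E\<^sup>2"
    using h by (simp add: E_def dvd_power_same)
  then have B: "P2\<^sup>2 dvd pcompose P2 ([:0, 1:] + E) - P2 - pderiv P2 * E"
    using dvd_trans power2_dvd_taylor_remainder[of E P2 "[:0, 1:]"] by (simp add: mult.commute)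
  have C: "P2\<^sup>2 dvd pderiv P2 * E"
    using P2' h by (simp add: E_def power2_eq_square mult_dvd_mono)
  have "P2\<^sup>2 dvd pcompose P2 ([:0, 1:] + E) - (pcompose P2 ([:0, 1:] + E) - P2 - pderiv P2 * E)
      - pderiv P2 * E"
    by (rule dvd_diff[OF dvd_diff[OF A B] C])
  then have "P2 * P2 dvd P2 * 1"
    by (simp add: power2_eq_square)
  then show False
    using irreducible_P2 by (simp add: irreducible_not_unit)
qed

lemma not_power2_dvd_twist_P1:
  assumes Q': "\<not> P2 dvd pderiv Q"
  shows "\<not> P2\<^sup>2 dvd twist \<sigma> Q P1"
proof
  assume sq: "P2\<^sup>2 dvd twist \<sigma> Q P1"
  have "P2 dvd twist \<sigma> Q (pderiv P1) * pderiv Q"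
    using power2_dvd_imp_dvd_pderiv[OF sq] by (simp add: pderiv_twist field_aut)
  then have "P1 dvd pderiv P1"
    using Q' prime_elem_P2 by (simp add: prime_elem_dvd_mult_iff P2_dvd_twist_iff)
  then have derivation: "P1 dvd pderiv w" if "P1 dvd w" for w
    using that by (rule dvd_pderiv_if_dvd_pderiv_self)
  obtain h where h: "P2 dvd twist \<sigma> Q h - [:0, 1:]"
    using twist_surj by blast
  define \<psi> where "\<psi> = twist (inv \<sigma>) h"
  have inv: "field_aut (inv \<sigma>)"
    using field_aut by (rule field_aut_inv)
  (* psi inverts twist modulo P1 and P2; differentiate psi Q = X and psi P2 = 0 modulo P1. *)
  have "P1 dvd pderiv (\<psi> Q - [:0, 1:])"
    using derivation dvd_twist_inv_Q_minus_X[OF h] by (simp add: \<psi>_def)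
  then have X': "P1 dvd \<psi> (pderiv Q) * pderiv h - 1"
    using inv by (simp add: \<psi>_def pderiv_diff pderiv_twist pderiv_pCons one_pCons)
  have h': "\<not> P1 dvd pderiv h"
  proof
    assume "P1 dvd pderiv h"
    then have "P1 dvd \<psi> (pderiv Q) * pderiv h"
      by simp
    with X' have "P1 dvd (\<psi> (pderiv Q) * pderiv h - 1) - \<psi> (pderiv Q) * pderiv h"
      by (rule dvd_diff)
    then show False
      using irreducible_P1 by (simp add: irreducible_not_unit)
  qed
  have "P1 dvd pderiv (\<psi> P2)"
    using derivation dvd_twist_inv_iff[OF h] by (simp add: \<psi>_def)
  then have "P1 dvd \<psi> (pderiv P2) * pderiv h"
    using inv by (simp add: \<psi>_def pderiv_twist)
  then have "P1 dvd \<psi> (pderiv P2)"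
    using h' prime_elem_P1 by (simp add: prime_elem_dvd_mult_iff)
  then have "P2 dvd pderiv P2"
    using dvd_twist_inv_iff[OF h] by (simp add: \<psi>_def)
  then show False
    using not_dvd_pderiv_P2[OF sq h] by contradiction
qed

lemma twist_P1_factor:
  assumes "\<not> P2 dvd pderiv Q"
  obtains T where "twist \<sigma> Q P1 = P2 * T" and "\<not> P2 dvd T"
proof -
  have "P2 dvd twist \<sigma> Q P1"
    by (simp add: P2_dvd_twist_iff)
  then obtain T where T: "twist \<sigma> Q P1 = P2 * T"
    by (rule dvdE)
  moreover have "\<not> P2 dvd T"
    using not_power2_dvd_twist_P1[OF assms] T by (auto simp: power2_eq_square)
  ultimately show ?thesis
    using that by blast
qed

lemma power_dvd_twist_iff:
  assumes "\<not> P2 dvd pderiv Q"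
  shows "P2 ^ m dvd twist \<sigma> Q w \<longleftrightarrow> P1 ^ m dvd w"
proof
  obtain T where T: "twist \<sigma> Q P1 = P2 * T" and T_P2: "\<not> P2 dvd T"
    using twist_P1_factor[OF assms] by blast
  have "P2 \<noteq> 0"
    using irreducible_P2 by auto
  show "P2 ^ m dvd twist \<sigma> Q w \<Longrightarrow> P1 ^ m dvd w"
  proof (induction m arbitrary: w)
    case (Suc m)
    have "P2 dvd P2 ^ Suc m"
      by simp
    then have "P2 dvd twist \<sigma> Q w"
      using Suc.prems by (rule dvd_trans)
    then have "P1 dvd w"
      by (simp add: P2_dvd_twist_iff)
    then obtain v where w: "w = P1 * v"
      by (rule dvdE)
    have "P2 * P2 ^ m dvd P2 * (T * twist \<sigma> Q v)"
      using Suc.prems by (simp add: w T twist_mult field_aut mult.assoc)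
    then have "P2 ^ m dvd T * twist \<sigma> Q v"
      using \<open>P2 \<noteq> 0\<close> by simp
    then have "P2 ^ m dvd twist \<sigma> Q v"
    proof (cases "m = 0")
      case False
      with prime_power_dvd_multD[OF prime_elem_P2 \<open>P2 ^ m dvd T * twist \<sigma> Q v\<close> _ T_P2]
      show ?thesis
        by simp
    qed simp
    then show ?case
      by (simp add: w Suc.IH)
  qed simp
qed (rule power_dvd_twist_if_power_dvd)

lemma ex_power_dvd_twist_minus:
  assumes "\<not> P2 dvd pderiv Q"
  shows "\<exists>w. P2 ^ m dvd twist \<sigma> Q w - y"
proof (induction m)
  case (Suc m)
  obtain w E where wE: "twist \<sigma> Q w - y = P2 ^ m * E"
    using Suc.IH by (auto elim: dvdE)
  (* Hensel step: correct w by P1^m c, where twist c is E / T^m modulo P2. *)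
  obtain T where T: "twist \<sigma> Q P1 = P2 * T" and "\<not> P2 dvd T"
    using twist_P1_factor[OF assms] by blast
  then have "\<not> P2 dvd T ^ m"
    using prime_elem_P2 by (simp add: prime_elem_dvd_power_iff)
  then obtain u where "P2 dvd u * T ^ m - 1"
    using ex_inverse_mod_irreducible[OF irreducible_P2] by blast
  then have "P2 dvd - (E * (u * T ^ m - 1))"
    by simp
  moreover obtain c where "P2 dvd twist \<sigma> Q c - E * u"
    using twist_surj by blast
  then have "P2 dvd T ^ m * (twist \<sigma> Q c - E * u)"
    by simp
  ultimately have "P2 dvd - (E * (u * T ^ m - 1)) - T ^ m * (twist \<sigma> Q c - E * u)"
    by (rule dvd_diff)
  also have "\<dots> = E - T ^ m * twist \<sigma> Q c"
    by (simp add: algebra_simps)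
  finally have "P2 dvd E - T ^ m * twist \<sigma> Q c" .
  moreover have "twist \<sigma> Q (w - P1 ^ m * c) - y = P2 ^ m * (E - T ^ m * twist \<sigma> Q c)"
    using wE T field_aut
    by (simp add: twist_diff twist_mult twist_power power_mult_distrib algebra_simps)
  ultimately have "P2 ^ Suc m dvd twist \<sigma> Q (w - P1 ^ m * c) - y"
    by (simp add: mult_dvd_mono)
  then show ?case
    by blast
qed simp

theorem qring_iso_twist_mod_power_iff:
  assumes "n > 1"
  shows "qring_iso (P1 ^ n) (P2 ^ n) (twist_mod \<sigma> Q (P1 ^ n) (P2 ^ n)) \<and>
      stabilizes_K (P2 ^ n) (twist_mod \<sigma> Q (P1 ^ n) (P2 ^ n))
    \<longleftrightarrow> \<not> P2 dvd pderiv Q"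
    (is "?iso \<and> ?stab \<longleftrightarrow> _")
proof -
  have "P2 ^ n dvd twist \<sigma> Q (P1 ^ n)"
    by (rule power_dvd_twist_if_power_dvd) simp
  then have iso_iff: "?iso \<longleftrightarrow>
      (\<forall>w. P2 ^ n dvd twist \<sigma> Q w \<longrightarrow> P1 ^ n dvd w) \<and> (\<forall>y. \<exists>w. P2 ^ n dvd twist \<sigma> Q w - y)"
    by (rule qring_iso_twist_mod_iff[OF field_aut])
  have "P1 \<noteq> 0"
    using irreducible_P1 by auto
  then have "degree (P1 ^ n) > 0"
    using assms degree_pos_if_irreducible[OF irreducible_P1] by (simp add: degree_power_eq)
  then have ?stab
    by (rule stabilizes_K_twist_mod[OF field_aut])
  moreover have "?iso \<longleftrightarrow> \<not> P2 dvd pderiv Q"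
  proof
    assume ?iso
    then obtain w where w: "P2 ^ n dvd twist \<sigma> Q w - [:0, 1:]"
      unfolding iso_iff by blast
    have "P2\<^sup>2 dvd P2 ^ n"
      using assms by (intro le_imp_power_dvd) simp
    also note w
    finally show "\<not> P2 dvd pderiv Q"
      by (rule not_dvd_pderiv_if_power2_dvd_twist_minus_X[OF field_aut _ irreducible_not_unit[OF irreducible_P2]])
  next
    assume Q': "\<not> P2 dvd pderiv Q"
    show ?iso
      unfolding iso_iff using power_dvd_twist_iff[OF Q'] ex_power_dvd_twist_minus[OF Q'] by blast
  qed
  ultimately show ?thesis
    by blast
qed

end

lemma qring_iso_imp_twist_iso:
  assumes "irreducible P1" and "irreducible P2" and "qring_iso P1 P2 f" and "stabilizes_K P2 f"
  shows "twist_iso (sigma_f P2 f) (Q_f P2 f) P1 P2"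
proof -
  define \<sigma> Q where "\<sigma> = sigma_f P2 f" and "Q = Q_f P2 f"
  have deg: "degree P2 > 0"
    using assms(2) by (rule degree_pos_if_irreducible)
  have hom: "qring_hom P1 P2 f"
    using assms(3) by (simp add: qring_iso_def)
  have \<sigma>: "field_aut \<sigma>"
    using sigma_f_spec[OF deg assms(4)] by (simp add: \<sigma>_def)
  have f_eq: "f p = twist \<sigma> Q p mod P2" for p
    using qring_hom_eq_twist[OF hom assms(4) deg] by (simp add: \<sigma>_def Q_def)
  have "f p = f (p mod P1)" for p
    using hom by (simp add: qring_hom_def)
  then have f_twist_mod: "f = twist_mod \<sigma> Q P1 P2"
    by (auto simp: fun_eq_iff f_eq twist_mod_def)
  have "f P1 = 0"
    using \<open>f P1 = f (P1 mod P1)\<close> by (simp add: f_eq)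
  then have ker: "P2 dvd twist \<sigma> Q P1"
    by (simp add: f_eq mod_eq_0_iff_dvd)
  have "(\<forall>w. P2 dvd twist \<sigma> Q w \<longrightarrow> P1 dvd w) \<and> (\<forall>y. \<exists>w. P2 dvd twist \<sigma> Q w - y)"
    using qring_iso_twist_mod_iff[OF \<sigma> ker] assms(3) by (simp add: f_twist_mod)
  moreover have "P2 dvd twist \<sigma> Q w" if "P1 dvd w" for w
    using ker twist_dvd_twist[OF \<sigma> that] by (rule dvd_trans)
  ultimately show ?thesis
    using \<sigma> assms(1,2) unfolding \<sigma>_def Q_def by unfold_locales blast+
qed

lemma f_Xn_eq_twist_mod: "f_Xn P1 P2 f n = twist_mod (sigma_f P2 f) (Q_f P2 f) (P1 ^ n) (P2 ^ n)"
  by (simp add: fun_eq_iff f_Xn_def twist_mod_def twist_def)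

theorem mainTheorem13:
  fixes P1 P2 :: "'a::field poly" and f :: "'a poly \<Rightarrow> 'a poly" and n :: nat
  assumes "irreducible P1" and "irreducible P2" and "n > 1"
    and "qring_iso P1 P2 f" and "stabilizes_K P2 f"
  shows "qring_iso (P1 ^ n) (P2 ^ n) (f_Xn P1 P2 f n) \<and> stabilizes_K (P2 ^ n) (f_Xn P1 P2 f n)
     \<longleftrightarrow> pderiv (Q_f P2 f) \<noteq> 0"
proof -
  interpret twist_iso "sigma_f P2 f" "Q_f P2 f" P1 P2
    using assms(1,2,4,5) by (rule qring_iso_imp_twist_iso)
  have hom: "qring_hom P1 P2 f"
    using assms(4) by (simp add: qring_iso_def)
  have "P2 \<noteq> 0"
    using assms(2) by auto
  then have "Q_f P2 f mod P2 = Q_f P2 f"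
    using hom by (simp add: Q_f_eq[OF hom] qring_hom_def)
  then have "P2 dvd pderiv (Q_f P2 f) \<longleftrightarrow> pderiv (Q_f P2 f) = 0"
    by (rule dvd_pderiv_iff_pderiv_eq_0)
  then show ?thesis
    using qring_iso_twist_mod_power_iff[OF assms(3)] by (simp add: f_Xn_eq_twist_mod)
qed

end
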